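(* Let $K\ge2$, $\varepsilon>0$, $\gamma=\gamma(\mu^* )\in\mathcal{P}^\varepsilon(K)$, $\eta\ge0$ and $\varepsilon_\pi\in[0,1]$. For $o\in\mathbb{R}^K_{>0}$ define $$\pi^{\varepsilon_\pi}_k(o)=(1-\varepsilon_\pi)\frac{\gamma_ko_k^{-\eta}}{\sum_{\ell}\gamma_\ell o_\ell^{-\eta}}+\varepsilon_\pi\gamma_k.$$ Then $\mathbf 1=(1,\dots,1)$ is a globally asymptotically stable equilibrium of the system $\dot o_k(t)=\dfrac{\pi^{\varepsilon_\pi}_k(o(t))}{\gamma_k}-o_k(t)$, $k=1,\dots,K$.
   Context: $\mathcal{P}^\varepsilon(K)$ is the set of probability vectors on $\{1,\dots,K\}$ with entries $\ge\varepsilon$. For $\dot z=h(z)$ with solutions $z(t;z_0,t_0)$, an equilibrium $z^*$ is globally asymptotically stable if (1) for each $\eta'>0$ there is $\delta>0$ independent of $t_0$ with $|z_0-z^*|<\delta\Rightarrow|z(t;z_0,t_0)-z^*|<\eta'$ for all $t\ge t_0\ge 0$, and (2) for all $\eta',\rho>0$ there is $T<\infty$ independent of $t_0$ with $|z(t;z_0,t_0)-z^*|<\eta'$ for $t\ge t_0+T$ whenever $|z_0-z^*|<\rho$. *)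

theory Defs
  imports "HOL-Analysis.Analysis"
begin

definition prob_eps :: "real \<Rightarrow> (real ^ 'k::finite) set" where
  "prob_eps eps = {g. (\<forall>k. g $ k \<ge> eps) \<and> (\<Sum>k\<in>UNIV. g $ k) = 1}"

definition pi_eps :: "real ^ 'k::finite \<Rightarrow> real \<Rightarrow> real \<Rightarrow> real ^ 'k \<Rightarrow> real ^ 'k" where
  "pi_eps g eta epi x = (\<chi> k. (1 - epi) * (g $ k * (x $ k) powr (- eta))
        / (\<Sum>l\<in>UNIV. g $ l * (x $ l) powr (- eta)) + epi * g $ k)"

definition field :: "real ^ 'k::finite \<Rightarrow> real \<Rightarrow> real \<Rightarrow> real ^ 'k \<Rightarrow> real ^ 'k" where
  "field g eta epi x = (\<chi> k. pi_eps g eta epi x $ k / g $ k - x $ k)"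

definition is_solution ::
  "('a::real_normed_vector \<Rightarrow> 'a) \<Rightarrow> 'a set \<Rightarrow> (real \<Rightarrow> 'a) \<Rightarrow> real \<Rightarrow> 'a \<Rightarrow> bool" where
  "is_solution h D z t0 z0 \<longleftrightarrow> z t0 = z0 \<and>
     (\<forall>t\<ge>t0. z t \<in> D \<and> (z has_vector_derivative h (z t)) (at t within {t0..}))"

definition glob_asymp_stable ::
  "('a::real_normed_vector \<Rightarrow> 'a) \<Rightarrow> 'a set \<Rightarrow> 'a \<Rightarrow> bool" where
  "glob_asymp_stable h D zs \<longleftrightarrow> zs \<in> D \<and> h zs = 0 \<and>
     (\<forall>e>0. \<exists>d>0. \<forall>t0\<ge>0. \<forall>z0\<in>D. \<forall>z. is_solution h D z t0 z0 \<and> norm (z0 - zs) < d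
          \<longrightarrow> (\<forall>t\<ge>t0. norm (z t - zs) < e)) \<and>
     (\<forall>e>0. \<forall>\<rho>>0. \<exists>T. \<forall>t0\<ge>0. \<forall>z0\<in>D. \<forall>z. is_solution h D z t0 z0 \<and> norm (z0 - zs) < \<rho>
          \<longrightarrow> (\<forall>t\<ge>t0 + T. norm (z t - zs) < e))"

end

theory Submission imports Defs begin

(* With r_k(o) = o_k^(-eta) / (sum_l gamma_l o_l^(-eta)) the system reads
   o_k' = (1 - eps_pi) (r_k(o) - 1) + 1 - o_k.  At a largest coordinate r_k <= 1, at a smallest
   r_k >= 1, so each of the 2K functions +-(o_k(t) - 1) e^t has nonpositive derivative whenever it
   is maximal among them.  A maximum principle for finite families shows that their maximum,
   e^t times the sup-distance from o(t) to 1, never exceeds its initial value.  Hence solutions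
   approach 1 at exponential rate 1, uniformly in the initial time, which gives both stability
   conditions. *)

lemma le_at_right_end_if_le_before:
  fixes f :: "real \<Rightarrow> real"
  assumes "continuous (at s within {a..}) f" "a < s" "\<And>y. a < y \<Longrightarrow> y < s \<Longrightarrow> f y \<le> C"
  shows "f s \<le> C"
proof -
  have "(f \<longlongrightarrow> f s) (at s within {a..s})"
    using assms(1) unfolding continuous_within by (rule tendsto_within_subset) auto
  then have "(f \<longlongrightarrow> f s) (at_left s)"
    by (simp add: at_within_Icc_at_left[OF \<open>a < s\<close>])
  moreover have "eventually (\<lambda>y. f y \<le> C) (at_left s)"
    unfolding eventually_at_left_field using assms(2,3) by blast
  ultimately show ?thesis by (rule tendsto_upperbound) simp
qed

lemma eventually_le_at_right_if_derivative_neg: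
  fixes f :: "real \<Rightarrow> real"
  assumes der: "(f has_real_derivative D) (at s within {a..})" and "a \<le> s" "f s \<le> C"
    and neg: "f s = C \<Longrightarrow> D < 0"
  shows "eventually (\<lambda>y. f y \<le> C) (at_right s)"
proof (cases "f s < C")
  case True
  have "(f \<longlongrightarrow> f s) (at_right s)"
    using DERIV_continuous[OF der] unfolding continuous_within
    by (rule tendsto_within_subset) (use \<open>a \<le> s\<close> in auto)
  from order_tendstoD(2)[OF this True] show ?thesis by (rule eventually_mono) simp
next
  case False
  with \<open>f s \<le> C\<close> neg have "D < 0" by simp
  from has_real_derivative_neg_dec_right[OF der this]
  obtain d where "d > 0" and dec: "\<forall>h>0. s + h \<in> {a..} \<longrightarrow> h < d \<longrightarrow> f (s + h) < f s"
    by blast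
  have "f y \<le> C" if "s < y" "y < s + d" for y
    using dec[rule_format, of "y - s"] that \<open>a \<le> s\<close> \<open>f s \<le> C\<close> by auto
  then show ?thesis unfolding eventually_at_right_field using \<open>d > 0\<close> by (auto intro!: exI[of _ "s + d"])
qed

lemma finite_family_le_const_strict:
  fixes u D :: "'i::finite \<Rightarrow> real \<Rightarrow> real"
  assumes der: "\<And>i t. a \<le> t \<Longrightarrow> (u i has_real_derivative D i t) (at t within {a..})"
    and decr: "\<And>i t. a \<le> t \<Longrightarrow> (\<forall>j. u j t \<le> u i t) \<Longrightarrow> D i t < 0"
    and init: "\<And>i. u i a \<le> C"
    and "a \<le> t"
  shows "u i t \<le> C"
proof (rule ccontr)
  assume "\<not> u i t \<le> C"
  define B where "B = {t. a \<le> t \<and> (\<exists>j. C < u j t)}"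
  have "t \<in> B" using \<open>\<not> u i t \<le> C\<close> \<open>a \<le> t\<close> unfolding B_def by (auto simp: not_le)
  then have Bne: "B \<noteq> {}" by blast
  have bdd: "bdd_below B" unfolding B_def by (auto intro: bdd_belowI[of _ a])
  define s where "s = Inf B"
  have "a \<le> s" unfolding s_def using Bne by (intro cInf_greatest) (auto simp: B_def)
  have le_at_s: "u j s \<le> C" for j
  proof (cases "a = s")
    case False
    with \<open>a \<le> s\<close> have "a < s" by simp
    have "u j y \<le> C" if "a < y" "y < s" for y
    proof -
      have "y \<notin> B" using cInf_lower[OF _ bdd] \<open>y < s\<close> unfolding s_def by force
      then show ?thesis using \<open>a < y\<close> unfolding B_def by (auto simp: not_less)
    qed
    from le_at_right_end_if_le_before[OF DERIV_continuous[OF der[OF \<open>a \<le> s\<close>]] \<open>a < s\<close> this]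
    show ?thesis .
  qed (use init in auto)
  have le_right_of_s: "eventually (\<lambda>y. u j y \<le> C) (at_right s)" for j
  proof (rule eventually_le_at_right_if_derivative_neg[OF der[OF \<open>a \<le> s\<close>] \<open>a \<le> s\<close> le_at_s])
    assume "u j s = C"
    with le_at_s have "\<forall>k. u k s \<le> u j s" by simp
    with decr \<open>a \<le> s\<close> show "D j s < 0" by blast
  qed
  have "eventually (\<lambda>y. \<forall>j. u j y \<le> C) (at_right s)"
    by (intro eventually_all_finite le_right_of_s)
  then obtain b where "s < b" and b: "\<forall>y>s. y < b \<longrightarrow> (\<forall>j. u j y \<le> C)"
    unfolding eventually_at_right_field by blast
  have "b \<le> y" if y: "y \<in> B" for y
  proof -
    obtain j where "C < u j y" using y unfolding B_def by blast
    have "s \<le> y" using cInf_lower[OF y bdd] unfolding s_def .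
    moreover have "y \<noteq> s" using \<open>C < u j y\<close> le_at_s[of j] by auto
    ultimately show ?thesis using b \<open>C < u j y\<close> by (meson linorder_not_le order_le_less not_le)
  qed
  then have "b \<le> s" unfolding s_def using Bne by (intro cInf_greatest)
  with \<open>s < b\<close> show False by simp
qed

lemma finite_family_le_const:
  fixes u D :: "'i::finite \<Rightarrow> real \<Rightarrow> real"
  assumes der: "\<And>i t. a \<le> t \<Longrightarrow> (u i has_real_derivative D i t) (at t within {a..})"
    and nonincr: "\<And>i t. a \<le> t \<Longrightarrow> (\<forall>j. u j t \<le> u i t) \<Longrightarrow> D i t \<le> 0"
    and init: "\<And>i. u i a \<le> C"
    and "a \<le> t"
  shows "u i t \<le> C"
proof (rule field_le_epsilon)
  fix e :: real assume "0 < e"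
  \<comment> \<open>subtracting c (t - a) makes the derivatives at maximal members strictly negative\<close>
  define c where "c = e / (t - a + 1)"
  have "0 < c" using \<open>0 < e\<close> \<open>a \<le> t\<close> unfolding c_def by simp
  have "u i t - c * (t - a) \<le> C"
  proof (rule finite_family_le_const_strict[where u = "\<lambda>i t. u i t - c * (t - a)"
        and D = "\<lambda>i t. D i t - c"])
    fix i t assume "a \<le> t"
    show "((\<lambda>t. u i t - c * (t - a)) has_real_derivative D i t - c) (at t within {a..})"
      by (auto intro!: derivative_eq_intros der[OF \<open>a \<le> t\<close>])
  next
    fix i t assume "a \<le> t" "\<forall>j. u j t - c * (t - a) \<le> u i t - c * (t - a)"
    then show "D i t - c < 0" using nonincr[of t i] \<open>0 < c\<close> by auto
  qed (use init \<open>a \<le> t\<close> in auto)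
  moreover have "c * (t - a) \<le> e"
    using \<open>0 < e\<close> \<open>a \<le> t\<close> unfolding c_def by (simp add: field_simps)
  ultimately show "u i t \<le> C + e" by simp
qed

definition rel_weight :: "real ^ 'k::finite \<Rightarrow> real \<Rightarrow> real ^ 'k \<Rightarrow> 'k \<Rightarrow> real" where
  "rel_weight g eta x k = x $ k powr (- eta) / (\<Sum>l\<in>UNIV. g $ l * x $ l powr (- eta))"

lemma weighted_powr_sum_pos:
  fixes g x :: "real ^ 'k::finite"
  assumes "\<forall>l. 0 \<le> g $ l" "(\<Sum>l\<in>UNIV. g $ l) = 1" "\<forall>l. 0 < x $ l"
  shows "0 < (\<Sum>l\<in>UNIV. g $ l * x $ l powr (- eta))"
proof -
  obtain l where "g $ l \<noteq> 0" using assms(2) by (metis sum.neutral zero_neq_one)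
  with assms(1) have "0 < g $ l" by (metis order_le_less)
  then show ?thesis using assms(1,3)
    by (intro sum_pos2[where i = l] mult_pos_pos mult_nonneg_nonneg)
      (simp_all add: less_imp_neq[symmetric])
qed

lemma rel_weight_le_1_at_max:
  fixes g x :: "real ^ 'k::finite"
  assumes "\<forall>l. 0 \<le> g $ l" "(\<Sum>l\<in>UNIV. g $ l) = 1" "\<forall>l. 0 < x $ l" "0 \<le> eta"
    and "\<forall>l. x $ l \<le> x $ k"
  shows "rel_weight g eta x k \<le> 1"
proof -
  have "x $ k powr (- eta) = (\<Sum>l\<in>UNIV. g $ l * x $ k powr (- eta))"
    using assms(2) by (simp add: sum_distrib_right[symmetric])
  also have "\<dots> \<le> (\<Sum>l\<in>UNIV. g $ l * x $ l powr (- eta))"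
    using assms by (intro sum_mono mult_left_mono powr_mono2') auto
  finally show ?thesis
    unfolding rel_weight_def using weighted_powr_sum_pos[OF assms(1-3)] by (simp only: divide_le_eq_1_pos)
qed

lemma rel_weight_ge_1_at_min:
  fixes g x :: "real ^ 'k::finite"
  assumes "\<forall>l. 0 \<le> g $ l" "(\<Sum>l\<in>UNIV. g $ l) = 1" "\<forall>l. 0 < x $ l" "0 \<le> eta"
    and "\<forall>l. x $ k \<le> x $ l"
  shows "1 \<le> rel_weight g eta x k"
proof -
  have "(\<Sum>l\<in>UNIV. g $ l * x $ l powr (- eta)) \<le> (\<Sum>l\<in>UNIV. g $ l * x $ k powr (- eta))"
    using assms by (intro sum_mono mult_left_mono powr_mono2') auto
  also have "\<dots> = x $ k powr (- eta)"
    using assms(2) by (simp add: sum_distrib_right[symmetric])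
  finally show ?thesis
    unfolding rel_weight_def using weighted_powr_sum_pos[OF assms(1-3)] by simp
qed

lemma field_nth:
  assumes "g $ k \<noteq> 0"
  shows "field g eta epi x $ k = (1 - epi) * (rel_weight g eta x k - 1) + 1 - x $ k"
  using assms unfolding field_def pi_eps_def rel_weight_def by (simp add: field_simps)

lemma field_at_one:
  assumes "\<forall>k. g $ k \<noteq> 0" "(\<Sum>k\<in>UNIV. g $ k) = 1"
  shows "field g eta epi (\<chi> k. 1) = 0"
  using assms by (simp add: vec_eq_iff field_nth rel_weight_def)

lemma is_solution_nth_derivative:
  assumes "is_solution h D z t0 z0" "t0 \<le> t"
  shows "((\<lambda>s. z s $ k) has_real_derivative h (z t) $ k) (at t within {t0..})"
proof -
  have "(z has_vector_derivative h (z t)) (at t within {t0..})"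
    using assms unfolding is_solution_def by blast
  from bounded_linear.has_vector_derivative[OF bounded_linear_vec_nth this]
  show ?thesis by (simp add: has_real_derivative_iff_has_vector_derivative)
qed

lemma solution_nth_dist_one_le:
  fixes g :: "real ^ 'k::finite" and z :: "real \<Rightarrow> real ^ 'k"
  assumes g: "\<forall>k. 0 < g $ k" "(\<Sum>k\<in>UNIV. g $ k) = 1" and "0 \<le> eta" "epi \<le> 1"
    and sol: "is_solution (field g eta epi) {x. \<forall>k. 0 < x $ k} z t0 z0"
    and "t0 \<le> t"
  shows "\<bar>z t $ k - 1\<bar> \<le> norm (z0 - (\<chi> k. 1)) * exp (t0 - t)"
proof -
  define N where "N = norm (z0 - (\<chi> k. 1))"
  define \<sigma> :: "bool \<Rightarrow> real" where "\<sigma> b = (if b then 1 else -1)" for b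
  define u where "u = (\<lambda>(k, b) s. \<sigma> b * (z s $ k - 1) * exp s)"
  define D where "D = (\<lambda>(k, b) s. \<sigma> b * (1 - epi) * (rel_weight g eta (z s) k - 1) * exp s)"
  have dz: "((\<lambda>s. z s $ k) has_real_derivative
      (1 - epi) * (rel_weight g eta (z s) k - 1) + 1 - z s $ k) (at s within {t0..})"
    if "t0 \<le> s" for s k
    using is_solution_nth_derivative[OF sol that, of k] g(1) by (simp add: field_nth less_imp_neq[symmetric])
  have "u i t \<le> N * exp t0" for i
  proof (rule finite_family_le_const[where D = D, OF _ _ _ \<open>t0 \<le> t\<close>])
    fix i :: "'k \<times> bool" and s assume "t0 \<le> s"
    obtain k b where i: "i = (k, b)" by fastforce
    show "(u i has_real_derivative D i s) (at s within {t0..})"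
      unfolding u_def D_def i by (auto intro!: derivative_eq_intros dz[OF \<open>t0 \<le> s\<close>] simp: algebra_simps)
  next
    fix i :: "'k \<times> bool" and s assume "t0 \<le> s" and max: "\<forall>j. u j s \<le> u i s"
    obtain k b where i: "i = (k, b)" by fastforce
    have z_pos: "\<forall>l. 0 < z s $ l" using sol \<open>t0 \<le> s\<close> unfolding is_solution_def by blast
    have "\<sigma> b * (rel_weight g eta (z s) k - 1) \<le> 0"
    proof (cases b)
      case True
      have "z s $ l \<le> z s $ k" for l using max[rule_format, of "(l, True)"] True i by (simp add: u_def \<sigma>_def)
      then show ?thesis using rel_weight_le_1_at_max[of g "z s" eta k] g z_pos \<open>0 \<le> eta\<close> True
        by (simp add: \<sigma>_def less_imp_le)
    next
      case False
      have "z s $ k \<le> z s $ l" for l using max[rule_format, of "(l, False)"] False i by (simp add: u_def \<sigma>_def)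
      then show ?thesis using rel_weight_ge_1_at_min[of g "z s" eta k] g z_pos \<open>0 \<le> eta\<close> False
        by (simp add: \<sigma>_def less_imp_le)
    qed
    moreover have "D i s = ((1 - epi) * exp s) * (\<sigma> b * (rel_weight g eta (z s) k - 1))"
      unfolding D_def i by (simp add: algebra_simps)
    ultimately show "D i s \<le> 0" using \<open>epi \<le> 1\<close> by (simp add: mult_nonneg_nonpos)
  next
    fix i :: "'k \<times> bool"
    obtain k b where i: "i = (k, b)" by fastforce
    have "\<bar>z0 $ k - 1\<bar> \<le> N" using component_le_norm_cart[of "z0 - (\<chi> k. 1)" k] by (simp add: N_def)
    then show "u i t0 \<le> N * exp t0" using sol unfolding u_def i \<sigma>_def is_solution_def by auto
  qed
  from this[of "(k, True)"] this[of "(k, False)"] have "\<bar>z t $ k - 1\<bar> * exp t \<le> N * exp t0"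
    by (simp add: u_def \<sigma>_def abs_if)
  then show ?thesis by (simp add: N_def exp_diff field_simps)
qed

lemma glob_asymp_stable_if_exp_decay:
  fixes h :: "'a::real_normed_vector \<Rightarrow> 'a"
  assumes "zs \<in> D" "h zs = 0" "0 < c"
    and decay: "\<And>z t0 z0 t. is_solution h D z t0 z0 \<Longrightarrow> t0 \<le> t \<Longrightarrow>
      norm (z t - zs) \<le> c * norm (z0 - zs) * exp (t0 - t)"
  shows "glob_asymp_stable h D zs"
  unfolding glob_asymp_stable_def
proof (intro conjI allI impI)
  fix e :: real assume "0 < e"
  show "\<exists>d>0. \<forall>t0\<ge>0. \<forall>z0\<in>D. \<forall>z. is_solution h D z t0 z0 \<and> norm (z0 - zs) < d
      \<longrightarrow> (\<forall>t\<ge>t0. norm (z t - zs) < e)"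
  proof (intro exI[of _ "e / c"] conjI allI impI ballI)
    fix t0 t :: real and z0 z
    assume sol: "is_solution h D z t0 z0 \<and> norm (z0 - zs) < e / c" and "t0 \<le> t"
    have "norm (z t - zs) \<le> c * norm (z0 - zs) * exp (t0 - t)" using decay sol \<open>t0 \<le> t\<close> by blast
    also have "\<dots> \<le> c * norm (z0 - zs)" using \<open>t0 \<le> t\<close> \<open>0 < c\<close> by (simp add: mult_left_le)
    also have "\<dots> < e" using sol \<open>0 < c\<close> by (simp add: field_simps)
    finally show "norm (z t - zs) < e" .
  qed (use \<open>0 < e\<close> \<open>0 < c\<close> in simp)
next
  fix e \<rho> :: real assume "0 < e" "0 < \<rho>"
  define T where "T = c * \<rho> / e"
  have "0 \<le> T" using \<open>0 < e\<close> \<open>0 < \<rho>\<close> \<open>0 < c\<close> unfolding T_def by simp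
  have "c * \<rho> < e * exp T"
    using exp_ge_add_one_self[of T] \<open>0 < e\<close> unfolding T_def by (simp add: field_simps)
  then have small: "c * \<rho> * exp (- T) < e" by (simp add: exp_minus field_simps)
  show "\<exists>T. \<forall>t0\<ge>0. \<forall>z0\<in>D. \<forall>z. is_solution h D z t0 z0 \<and> norm (z0 - zs) < \<rho>
      \<longrightarrow> (\<forall>t\<ge>t0 + T. norm (z t - zs) < e)"
  proof (intro exI[of _ T] allI impI ballI)
    fix t0 t :: real and z0 z
    assume sol: "is_solution h D z t0 z0 \<and> norm (z0 - zs) < \<rho>" and "t0 + T \<le> t"
    have "norm (z t - zs) \<le> c * norm (z0 - zs) * exp (t0 - t)"
      using decay sol \<open>t0 + T \<le> t\<close> \<open>0 \<le> T\<close> by simp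
    also have "\<dots> \<le> c * \<rho> * exp (- T)"
      using sol \<open>t0 + T \<le> t\<close> \<open>0 < c\<close> \<open>0 < \<rho>\<close> by (intro mult_mono mult_left_mono) auto
    also have "\<dots> < e" by (rule small)
    finally show "norm (z t - zs) < e" .
  qed
qed (use assms in auto)

theorem lemma6:
  fixes g :: "real ^ 'k::finite" and eps eta epi :: real
  assumes "CARD('k) \<ge> 2"
    and "eps > 0"
    and "g \<in> prob_eps eps"
    and "eta \<ge> 0"
    and "0 \<le> epi" and "epi \<le> 1"
  shows "glob_asymp_stable (field g eta epi) {x. \<forall>k. x $ k > 0} (\<chi> k. 1)"
proof (rule glob_asymp_stable_if_exp_decay[where c = "real CARD('k)"])
  have g: "\<forall>k. 0 < g $ k" "(\<Sum>k\<in>UNIV. g $ k) = 1"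
    using assms(2,3) unfolding prob_eps_def by (auto intro: less_le_trans)
  then show "field g eta epi (\<chi> k. 1) = 0" by (simp add: field_at_one less_imp_neq[symmetric])
  fix z t0 z0 t
  assume "is_solution (field g eta epi) {x. \<forall>k. 0 < x $ k} z t0 z0" "t0 \<le> t"
  note coordinate_bound = solution_nth_dist_one_le[OF g assms(4,6) this]
  have "norm (z t - (\<chi> k. 1)) \<le> (\<Sum>k\<in>UNIV. \<bar>(z t - (\<chi> k. 1)) $ k\<bar>)" by (rule norm_le_l1_cart)
  also have "\<dots> \<le> real CARD('k) * (norm (z0 - (\<chi> k. 1)) * exp (t0 - t))"
    using coordinate_bound by (intro sum_bounded_above) simp
  finally show "norm (z t - (\<chi> k. 1)) \<le> real CARD('k) * norm (z0 - (\<chi> k. 1)) * exp (t0 - t)"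
    by (simp only: mult.assoc)
qed simp_all

end
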